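(* Let $\mathcal{H}$ be a reproducing kernel Hilbert space (RKHS) of real-valued functions on the state-action space $\mathfrak{Z} \coloneqq \mathfrak{S} \times \mathfrak{A}$ (state space $\mathfrak{S} \subset \mathbb{R}^D$, action space $\mathfrak{A}$), with inner product $\langle\cdot,\cdot\rangle_{\mathcal{H}}$, norm $\|\cdot\|_{\mathcal{H}}$, reproducing kernel $\kappa$ and feature map $\varphi(\mathbf{z}) \coloneqq \kappa(\mathbf{z},\cdot)$. Let $\mathcal{M}$ be the set of all mappings (stationary policies) $\mu \colon \mathfrak{S} \to \mathfrak{A}$, let $g \in \mathcal{H}$, $\alpha > 0$, let $\{\mathbf{s}_i^{\mathrm{av}}\}_{i=1}^{N_{\mathrm{av}}} \subset \mathfrak{S}$ be user-chosen states, and let $\{\psi_i\}_{i=1}^{N_{\mathrm{av}}} \subset \mathcal{H}$, with $\boldsymbol{\Psi} \coloneqq [\psi_1, \ldots, \psi_{N_{\mathrm{av}}}]$. For $\mu \in \mathcal{M}$ define $\boldsymbol{\Phi}_{\mu}^{\mathrm{av}} \coloneqq [\varphi(\mathbf{s}_1^{\mathrm{av}}, \mu(\mathbf{s}_1^{\mathrm{av}})), \ldots, \varphi(\mathbf{s}_{N_{\mathrm{av}}}^{\mathrm{av}}, \mu(\mathbf{s}_{N_{\mathrm{av}}}^{\mathrm{av}}))]$, and the $N_{\mathrm{av}} \times N_{\mathrm{av}}$ kernel matrices $\mathbf{K}_{\Psi} \coloneqq \boldsymbol{\Psi}^{\intercal}\boldsymbol{\Psi}$ (entries $\langle \psi_i,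 \psi_j\rangle_{\mathcal{H}}$) and $\mathbf{K}_{\mu}^{\mathrm{av}} \coloneqq \boldsymbol{\Phi}_{\mu}^{\mathrm{av}\intercal}\boldsymbol{\Phi}_{\mu}^{\mathrm{av}}$ (entries $\kappa((\mathbf{s}_i^{\mathrm{av}}, \mu(\mathbf{s}_i^{\mathrm{av}})), (\mathbf{s}_j^{\mathrm{av}}, \mu(\mathbf{s}_j^{\mathrm{av}})))$). Define the Bellman mappings $T_{\mu}, T \colon \mathcal{H} \to \mathcal{H}$ by $T_{\mu}(Q) \coloneqq g + \alpha \sum_{i=1}^{N_{\mathrm{av}}} Q(\mathbf{s}_i^{\mathrm{av}}, \mu(\mathbf{s}_i^{\mathrm{av}}))\, \psi_i = g + \alpha \boldsymbol{\Psi}\boldsymbol{\Phi}_{\mu}^{\mathrm{av}\intercal} Q$ and $T(Q) \coloneqq g + \alpha \sum_{i=1}^{N_{\mathrm{av}}} \inf_{a \in \mathfrak{A}} Q(\mathbf{s}_i^{\mathrm{av}}, a)\, \psi_i$. Then for all $Q_1, Q_2 \in \mathcal{H}$ and all $\mu \in \mathcal{M}$, $\|T_{\mu}(Q_1) - T_{\mu}(Q_2)\|_{\mathcal{H}} \leq \beta \|Q_1 - Q_2\|_{\mathcal{H}}$ and $\|T(Q_1) - T(Q_2)\|_{\mathcal{H}} \leq \beta \|Q_1 - Q_2\|_{\mathcal{H}}$, where $\beta \coloneqq \alpha \big( \|\mathbf{K}_{\Psi}\|_2 \, \sup_{\mu' \in \mathcal{M}} \|\mathbf{K}_{\mu'}^{\mathrm{av}}\|_2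 \big)^{1/2}$ and $\|\cdot\|_2$ is the spectral norm of a matrix. Hence, if $\beta = 1$ the mappings $T_{\mu}, T$ are nonexpansive, and if $\beta < 1$ they are contractions in $(\mathcal{H}, \langle\cdot,\cdot\rangle_{\mathcal{H}})$.
   Context: Setting: nonparametric Bellman mappings for reinforcement learning defined directly in an RKHS, where the one-step loss $g$ and the Q-functions belong to $\mathcal{H}$; the functions $\psi_i$ and states $\mathbf{s}_i^{\mathrm{av}}$ are user-chosen design parameters used to approximate the conditional expectation of the classical Bellman maps by sample averaging. *)

theory Defs
  imports "HOL-Analysis.Analysis"
begin

text \<open>An RKHS of real-valued functions on the state-action space 's \<times> 'a is modelled
  as a real Hilbert space 'h together with the map ev identifying each element with
  a function on 's \<times> 'a (injective, i.e. elements ARE functions) and a feature map phi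
  satisfying the reproducing property ev Q z = inner (phi z) Q.\<close>

definition is_rkhs :: "('h::real_inner \<Rightarrow> 'z \<Rightarrow> real) \<Rightarrow> ('z \<Rightarrow> 'h) \<Rightarrow> bool" where
  "is_rkhs ev phi \<longleftrightarrow> inj ev \<and> (\<forall>Q z. ev Q z = inner (phi z) Q)"

definition rkhs_kernel :: "('z \<Rightarrow> 'h::real_inner) \<Rightarrow> 'z \<Rightarrow> 'z \<Rightarrow> real" where
  "rkhs_kernel phi z z' = inner (phi z) (phi z')"

definition spec_norm :: "real^'n^'n \<Rightarrow> real" where
  "spec_norm M = onorm (\<lambda>x. M *v x)"

definition K_Psi :: "('n::finite \<Rightarrow> 'h::real_inner) \<Rightarrow> real^'n^'n" where
  "K_Psi psi = (\<chi> i j. inner (psi i) (psi j))"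

definition K_av :: "('s \<times> 'a \<Rightarrow> 'h::real_inner) \<Rightarrow> ('n::finite \<Rightarrow> 's) \<Rightarrow> ('s \<Rightarrow> 'a) \<Rightarrow> real^'n^'n" where
  "K_av phi s mu = (\<chi> i j. rkhs_kernel phi (s i, mu (s i)) (s j, mu (s j)))"

definition T_mu :: "('h::real_inner \<Rightarrow> 's \<times> 'a \<Rightarrow> real) \<Rightarrow> 'h \<Rightarrow> real \<Rightarrow> ('n::finite \<Rightarrow> 's)
     \<Rightarrow> ('n \<Rightarrow> 'h) \<Rightarrow> ('s \<Rightarrow> 'a) \<Rightarrow> 'h \<Rightarrow> 'h" where
  "T_mu ev g \<alpha> s psi mu Q = g + \<alpha> *\<^sub>R (\<Sum>i\<in>UNIV. ev Q (s i, mu (s i)) *\<^sub>R psi i)"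

definition T_bell :: "('h::real_inner \<Rightarrow> 's \<times> 'a \<Rightarrow> real) \<Rightarrow> 'h \<Rightarrow> real \<Rightarrow> ('n::finite \<Rightarrow> 's)
     \<Rightarrow> ('n \<Rightarrow> 'h) \<Rightarrow> 'h \<Rightarrow> 'h" where
  "T_bell ev g \<alpha> s psi Q = g + \<alpha> *\<^sub>R (\<Sum>i\<in>UNIV. (INF a. ev Q (s i, a)) *\<^sub>R psi i)"

text \<open>beta = alpha * (||K_Psi||_2 * sup_mu ||K_mu^av||_2)^(1/2), taken in the extended
  reals since the supremum over all policies may be infinite.  We use
  sqrt(sup) = sup(sqrt), valid as sqrt is monotone and continuous.\<close>
definition beta :: "('s \<times> 'a \<Rightarrow> 'h::real_inner) \<Rightarrow> real \<Rightarrow> ('n::finite \<Rightarrow> 's) \<Rightarrow> ('n \<Rightarrow> 'h) \<Rightarrow> ereal" where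
  "beta phi \<alpha> s psi = ereal \<alpha> * ereal (sqrt (spec_norm (K_Psi psi)))
      * (SUP mu. ereal (sqrt (spec_norm (K_av phi s mu))))"

end

theory Submission
  imports Defs
begin

text \<open>The increments of both maps have the form \<open>\<alpha> \<Psi> c\<close>: for \<open>T_\<mu>\<close> the coefficient vector is
  \<open>c = \<Phi>\<^sub>\<mu>\<^sup>T (Q\<^sub>1 - Q\<^sub>2)\<close>, for \<open>T\<close> it is the vector of differences of the infima at the
  sample states.  Since \<open>\<parallel>\<Psi> c\<parallel>\<^sup>2 = c\<^sup>T K\<^sub>\<Psi> c\<close>, we get \<open>\<parallel>\<Psi> c\<parallel> \<le> \<parallel>K\<^sub>\<Psi>\<parallel>\<^sup>1\<^sup>/\<^sup>2 \<parallel>c\<parallel>\<close>, and dually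
  \<open>\<parallel>\<Phi>\<^sub>\<mu>\<^sup>T Q\<parallel> \<le> \<parallel>K\<^sub>\<mu>\<parallel>\<^sup>1\<^sup>/\<^sup>2 \<parallel>Q\<parallel>\<close>.  For \<open>T\<close>, up to \<open>\<epsilon>\<close> the difference of two infima over actions is
  bounded by the difference of \<open>Q\<^sub>1\<close> and \<open>Q\<^sub>2\<close> at a suitable action; choosing these actions
  at the sample states defines a policy and reduces \<open>T\<close> to the case of \<open>T_\<mu>\<close>.\<close>

lemma spec_norm_nonneg: "0 \<le> spec_norm M"
  unfolding spec_norm_def by (rule onorm_pos_le) simp

lemma norm_mult_vec_le_spec_norm: "norm (M *v x) \<le> spec_norm M * norm x"
  unfolding spec_norm_def by (rule onorm) simp

lemma K_av_eq_K_Psi: "K_av phi s mu = K_Psi (\<lambda>i. phi (s i, mu (s i)))"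
  by (simp add: K_av_def K_Psi_def rkhs_kernel_def)

lemma norm_sum_scaleR_le_K_Psi:
  fixes f :: "'n::finite \<Rightarrow> 'h::real_inner" and c :: "real^'n"
  shows "norm (\<Sum>i\<in>UNIV. c$i *\<^sub>R f i) \<le> sqrt (spec_norm (K_Psi f)) * norm c"
proof -
  let ?K = "K_Psi f"
  have "(norm (\<Sum>i\<in>UNIV. c$i *\<^sub>R f i))\<^sup>2 = inner c (?K *v c)"
    unfolding power2_norm_eq_inner
    by (simp add: inner_sum_left inner_sum_right inner_vec_def matrix_vector_mult_def K_Psi_def
        sum_distrib_left mult_ac) (intro sum.cong refl; simp add: inner_commute)
  also have "\<dots> \<le> norm c * norm (?K *v c)" by (rule norm_cauchy_schwarz)
  also have "\<dots> \<le> norm c * (spec_norm ?K * norm c)"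
    by (rule mult_left_mono[OF norm_mult_vec_le_spec_norm]) simp
  also have "\<dots> = (sqrt (spec_norm ?K) * norm c)\<^sup>2"
    using spec_norm_nonneg[of ?K] by (simp add: power_mult_distrib power2_eq_square)
  finally show ?thesis
    by (rule power2_le_imp_le) (simp add: spec_norm_nonneg)
qed

lemma norm_inner_vector_le_K_Psi:
  fixes f :: "'n::finite \<Rightarrow> 'h::real_inner"
  shows "norm (\<chi> i. inner (f i) Q) \<le> sqrt (spec_norm (K_Psi f)) * norm Q"
proof -
  define v :: "real^'n" where "v = (\<chi> i. inner (f i) Q)"
  define S where "S = sqrt (spec_norm (K_Psi f))"
  have "(norm v)\<^sup>2 = inner (\<Sum>i\<in>UNIV. v$i *\<^sub>R f i) Q"
    unfolding power2_norm_eq_inner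
    by (simp add: inner_sum_left inner_vec_def v_def power2_eq_square)
  also have "\<dots> \<le> norm (\<Sum>i\<in>UNIV. v$i *\<^sub>R f i) * norm Q" by (rule norm_cauchy_schwarz)
  also have "\<dots> \<le> S * norm v * norm Q"
    by (rule mult_right_mono) (simp_all add: S_def norm_sum_scaleR_le_K_Psi)
  finally have "norm v * norm v \<le> norm v * (S * norm Q)"
    by (simp add: power2_eq_square mult_ac)
  moreover have "0 \<le> S * norm Q" by (simp add: S_def spec_norm_nonneg)
  ultimately show ?thesis
    unfolding v_def[symmetric] S_def[symmetric]
    by (cases "norm v = 0") (simp_all add: mult_le_cancel_left)
qed

lemma INF_diff_approx:
  fixes f1 f2 :: "'a \<Rightarrow> real"
  assumes "bdd_below (range f1)" and "bdd_below (range f2)" and "0 < \<epsilon>"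
  shows "\<exists>a. \<bar>(INF a. f1 a) - (INF a. f2 a)\<bar> \<le> \<bar>f1 a - f2 a\<bar> + \<epsilon>"
proof -
  have approx: "\<exists>a. h a < (INF a. h a) + \<epsilon>" if "bdd_below (range h)" for h :: "'a \<Rightarrow> real"
    using cINF_less_iff[of UNIV h "(INF a. h a) + \<epsilon>"] that \<open>0 < \<epsilon>\<close> by auto
  show ?thesis
  proof (cases "(INF a. f2 a) \<le> (INF a. f1 a)")
    case True
    obtain a where "f2 a < (INF a. f2 a) + \<epsilon>" using approx assms(2) by blast
    moreover have "(INF a. f1 a) \<le> f1 a" using assms(1) by (simp add: cINF_lower)
    ultimately show ?thesis using True by (intro exI[of _ a]) linarith
  next
    case False
    obtain a where "f1 a < (INF a. f1 a) + \<epsilon>" using approx assms(1) by blast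
    moreover have "(INF a. f2 a) \<le> f2 a" using assms(2) by (simp add: cINF_lower)
    ultimately show ?thesis using False by (intro exI[of _ a]) linarith
  qed
qed

lemma policy_approx_INF_diff:
  fixes f1 f2 :: "'s \<Rightarrow> 'a \<Rightarrow> real"
  assumes "\<And>x. x \<in> S \<Longrightarrow> bdd_below (range (f1 x))"
    and "\<And>x. x \<in> S \<Longrightarrow> bdd_below (range (f2 x))" and "0 < \<epsilon>"
  shows "\<exists>mu. \<forall>x\<in>S. \<bar>(INF a. f1 x a) - (INF a. f2 x a)\<bar> \<le> \<bar>f1 x (mu x) - f2 x (mu x)\<bar> + \<epsilon>"
  using assms by (intro bchoice ballI INF_diff_approx) auto

lemma norm_le_componentwise_plus_const:
  fixes d v :: "real^'n" and \<epsilon> :: real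
  assumes "\<And>i. \<bar>d$i\<bar> \<le> \<bar>v$i\<bar> + \<epsilon>" and "0 \<le> \<epsilon>"
  shows "norm d \<le> norm v + CARD('n) * \<epsilon>"
proof -
  have "norm d \<le> norm ((\<chi> i. \<bar>v$i\<bar>) + (\<chi> i. \<epsilon>))"
    by (rule norm_le_componentwise_cart) (use assms in simp)
  also have "\<dots> \<le> norm (\<chi> i. \<bar>v$i\<bar>) + norm ((\<chi> i. \<epsilon>) :: real^'n)"
    by (rule norm_triangle_ineq)
  also have "norm (\<chi> i. \<bar>v$i\<bar>) \<le> norm v"
    by (rule norm_le_componentwise_cart) simp
  also have "norm ((\<chi> i. \<epsilon>) :: real^'n) \<le> CARD('n) * \<epsilon>"
    using norm_le_l1_cart[of "(\<chi> i. \<epsilon>) :: real^'n"] assms(2) by simp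
  finally show ?thesis by simp
qed

lemma rkhs_ev_diff:
  assumes "is_rkhs ev phi"
  shows "ev Q1 z - ev Q2 z = ev (Q1 - Q2) z"
  using assms by (simp add: is_rkhs_def inner_diff_right)

definition sqrt_sup_K_av :: "('s \<times> 'a \<Rightarrow> 'h::real_inner) \<Rightarrow> ('n::finite \<Rightarrow> 's) \<Rightarrow> ereal" where
  "sqrt_sup_K_av phi s = (SUP mu. ereal (sqrt (spec_norm (K_av phi s mu))))"

lemma beta_eq: "beta phi \<alpha> s psi = ereal \<alpha> * ereal (sqrt (spec_norm (K_Psi psi))) * sqrt_sup_K_av phi s"
  by (simp add: beta_def sqrt_sup_K_av_def)

lemma norm_samples_le_sqrt_sup_K_av:
  assumes "is_rkhs ev phi"
  shows "ereal (norm (\<chi> i. ev Q (s i, mu (s i)))) \<le> sqrt_sup_K_av phi s * ereal (norm Q)"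
proof -
  have "ereal (norm (\<chi> i. ev Q (s i, mu (s i)))) \<le> ereal (sqrt (spec_norm (K_av phi s mu))) * ereal (norm Q)"
    using assms norm_inner_vector_le_K_Psi[of "\<lambda>i. phi (s i, mu (s i))" Q]
    by (simp add: is_rkhs_def K_av_eq_K_Psi)
  also have "\<dots> \<le> sqrt_sup_K_av phi s * ereal (norm Q)"
    unfolding sqrt_sup_K_av_def by (intro ereal_mult_right_mono SUP_upper) simp_all
  finally show ?thesis .
qed

lemma norm_INF_diffs_le_sqrt_sup_K_av:
  fixes s :: "'n::finite \<Rightarrow> 's"
  assumes "is_rkhs ev phi" and bdd: "\<forall>Q i. bdd_below (range (\<lambda>a. ev Q (s i, a)))"
  shows "ereal (norm (\<chi> i. (INF a. ev Q1 (s i, a)) - (INF a. ev Q2 (s i, a))))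
    \<le> sqrt_sup_K_av phi s * ereal (norm (Q1 - Q2))"
proof (rule ereal_le_epsilon2)
  fix e :: real
  assume "0 < e"
  define \<epsilon> where "\<epsilon> = e / (CARD('n) + 1)"
  have "0 < \<epsilon>" and "CARD('n) * \<epsilon> \<le> e"
    using \<open>0 < e\<close> by (simp_all add: \<epsilon>_def field_simps)
  have "\<exists>mu. \<forall>x\<in>range s. \<bar>(INF a. ev Q1 (x, a)) - (INF a. ev Q2 (x, a))\<bar>
      \<le> \<bar>ev Q1 (x, mu x) - ev Q2 (x, mu x)\<bar> + \<epsilon>"
    by (rule policy_approx_INF_diff) (use bdd \<open>0 < \<epsilon>\<close> in auto)
  then obtain mu where mu: "\<forall>x\<in>range s. \<bar>(INF a. ev Q1 (x, a)) - (INF a. ev Q2 (x, a))\<bar>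
      \<le> \<bar>ev Q1 (x, mu x) - ev Q2 (x, mu x)\<bar> + \<epsilon>" ..
  let ?v = "\<chi> i. ev (Q1 - Q2) (s i, mu (s i))"
  have "norm (\<chi> i. (INF a. ev Q1 (s i, a)) - (INF a. ev Q2 (s i, a))) \<le> norm ?v + CARD('n) * \<epsilon>"
    using mu \<open>0 < \<epsilon>\<close>
    by (intro norm_le_componentwise_plus_const) (simp_all add: rkhs_ev_diff[OF assms(1)])
  then have "ereal (norm (\<chi> i. (INF a. ev Q1 (s i, a)) - (INF a. ev Q2 (s i, a))))
      \<le> ereal (norm ?v) + ereal e"
    using \<open>CARD('n) * \<epsilon> \<le> e\<close> by simp
  also have "\<dots> \<le> sqrt_sup_K_av phi s * ereal (norm (Q1 - Q2)) + ereal e"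
    by (intro add_right_mono norm_samples_le_sqrt_sup_K_av assms(1))
  finally show "ereal (norm (\<chi> i. (INF a. ev Q1 (s i, a)) - (INF a. ev Q2 (s i, a))))
      \<le> sqrt_sup_K_av phi s * ereal (norm (Q1 - Q2)) + ereal e" .
qed

lemma T_mu_diff:
  assumes "is_rkhs ev phi"
  shows "T_mu ev g \<alpha> s psi mu Q1 - T_mu ev g \<alpha> s psi mu Q2
    = \<alpha> *\<^sub>R (\<Sum>i\<in>UNIV. (\<chi> i. ev (Q1 - Q2) (s i, mu (s i)))$i *\<^sub>R psi i)"
  by (simp add: T_mu_def rkhs_ev_diff[OF assms, symmetric] scaleR_diff_right[symmetric]
      sum_subtractf[symmetric] scaleR_diff_left[symmetric])

lemma T_bell_diff:
  "T_bell ev g \<alpha> s psi Q1 - T_bell ev g \<alpha> s psi Q2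
    = \<alpha> *\<^sub>R (\<Sum>i\<in>UNIV. (\<chi> i. (INF a. ev Q1 (s i, a)) - (INF a. ev Q2 (s i, a)))$i *\<^sub>R psi i)"
  by (simp add: T_bell_def scaleR_diff_right[symmetric]
      sum_subtractf[symmetric] scaleR_diff_left[symmetric])

lemma norm_scaled_combination_le:
  fixes psi :: "'n::finite \<Rightarrow> 'h::real_inner" and c :: "real^'n"
  assumes "ereal (norm c) \<le> B * ereal q" and "0 \<le> \<alpha>"
  shows "ereal (norm (\<alpha> *\<^sub>R (\<Sum>i\<in>UNIV. c$i *\<^sub>R psi i)))
     \<le> ereal \<alpha> * ereal (sqrt (spec_norm (K_Psi psi))) * B * ereal q"
proof -
  define P where "P = sqrt (spec_norm (K_Psi psi))"
  have "norm (\<alpha> *\<^sub>R (\<Sum>i\<in>UNIV. c$i *\<^sub>R psi i)) \<le> \<alpha> * (P * norm c)"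
    using norm_sum_scaleR_le_K_Psi[where f = psi and c = c] assms(2)
    by (simp add: P_def mult_left_mono)
  then have "ereal (norm (\<alpha> *\<^sub>R (\<Sum>i\<in>UNIV. c$i *\<^sub>R psi i))) \<le> ereal (\<alpha> * P) * ereal (norm c)"
    by (simp add: mult_ac)
  also have "\<dots> \<le> ereal (\<alpha> * P) * (B * ereal q)"
    using assms by (intro ereal_mult_left_mono) (simp_all add: P_def spec_norm_nonneg)
  finally show ?thesis by (simp add: P_def mult_ac)
qed

theorem theorem2:
  fixes ev :: "'h::{real_inner,complete_space} \<Rightarrow> 's \<times> 'a \<Rightarrow> real"
    and phi :: "'s \<times> 'a \<Rightarrow> 'h"
    and g :: 'h and \<alpha> :: real
    and s :: "'n::finite \<Rightarrow> 's" and psi :: "'n \<Rightarrow> 'h"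
  assumes "is_rkhs ev phi"
    and "\<alpha> > 0"
    and "\<forall>Q i. bdd_below (range (\<lambda>a. ev Q (s i, a)))"
  shows "\<forall>Q1 Q2 mu.
     ereal (norm (T_mu ev g \<alpha> s psi mu Q1 - T_mu ev g \<alpha> s psi mu Q2))
        \<le> beta phi \<alpha> s psi * ereal (norm (Q1 - Q2))
   \<and> ereal (norm (T_bell ev g \<alpha> s psi Q1 - T_bell ev g \<alpha> s psi Q2))
        \<le> beta phi \<alpha> s psi * ereal (norm (Q1 - Q2))"
proof (intro allI conjI)
  fix Q1 Q2 :: 'h and mu :: "'s \<Rightarrow> 'a"
  have "0 \<le> \<alpha>" using assms(2) by simp
  show "ereal (norm (T_mu ev g \<alpha> s psi mu Q1 - T_mu ev g \<alpha> s psi mu Q2))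
      \<le> beta phi \<alpha> s psi * ereal (norm (Q1 - Q2))"
    unfolding T_mu_diff[OF assms(1)] beta_eq
    by (intro norm_scaled_combination_le norm_samples_le_sqrt_sup_K_av assms(1) \<open>0 \<le> \<alpha>\<close>)
  show "ereal (norm (T_bell ev g \<alpha> s psi Q1 - T_bell ev g \<alpha> s psi Q2))
      \<le> beta phi \<alpha> s psi * ereal (norm (Q1 - Q2))"
    unfolding T_bell_diff beta_eq
    by (intro norm_scaled_combination_le norm_INF_diffs_le_sqrt_sup_K_av assms(1,3) \<open>0 \<le> \<alpha>\<close>)
qed

end
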